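(* For every integer $z>0$, almost surely $$\lim_{n\to\infty}\frac{\Xi^*(\{0,z\},n)}{\log n}=\frac{-1}{\log\left(\frac{2q+h^{z/2}}{1+h^{z/2}}\right)}.$$
   Context: Let $0<q<p<1$ with $p+q=1$ and set $h=q/p$. Let $X_1,X_2,\dots$ be i.i.d. with $\mathbf P(X_1=1)=p$, $\mathbf P(X_1=-1)=q$, $S_0=0$, $S_n=X_1+\dots+X_n$. For $z\in\mathbb Z$, $n\ge1$, let $\xi(z,n)=\#\{k:0<k\le n,\ S_k=z\}$. For $A\subset\mathbb Z$ let $\Xi(A,n)=\sum_{z\in A}\xi(z,n)$ (the occupation time of $A$ up to time $n$), and $\Xi^*(A,n)=\max_{a\in\mathbb Z}\Xi(A+a,n)$ where $A+a=\{x+a:x\in A\}$. *)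

theory Defs
  imports "HOL-Probability.Probability"
begin

text \<open>The steps X_1, X_2, ... of the paper are X 0, X 1, ... here, so
  S_k = X_1 + ... + X_k is rw_S X k = sum of X i for i < k, and S_0 = 0.\<close>
definition rw_S :: "(nat \<Rightarrow> 'a \<Rightarrow> int) \<Rightarrow> nat \<Rightarrow> 'a \<Rightarrow> int" where
  "rw_S X k \<omega> = (\<Sum>i<k. X i \<omega>)"

definition rw_xi :: "(nat \<Rightarrow> 'a \<Rightarrow> int) \<Rightarrow> int \<Rightarrow> nat \<Rightarrow> 'a \<Rightarrow> nat" where
  "rw_xi X z n \<omega> = card {k \<in> {1..n}. rw_S X k \<omega> = z}"

definition rw_Xi :: "(nat \<Rightarrow> 'a \<Rightarrow> int) \<Rightarrow> int set \<Rightarrow> nat \<Rightarrow> 'a \<Rightarrow> nat" where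
  "rw_Xi X A n \<omega> = (\<Sum>z\<in>A. rw_xi X z n \<omega>)"

text \<open>Xi*(A,n) = max over integer shifts a of Xi(A+a,n) (a bounded set of naturals,
  so the supremum is the maximum).\<close>
definition rw_Xi_star :: "(nat \<Rightarrow> 'a \<Rightarrow> int) \<Rightarrow> int set \<Rightarrow> nat \<Rightarrow> 'a \<Rightarrow> nat" where
  "rw_Xi_star X A n \<omega> = Sup (range (\<lambda>a::int. rw_Xi X ((\<lambda>x. x + a) ` A) n \<omega>))"

end

theory Submission
  imports Defs "HOL-Real_Asymp.Real_Asymp"
begin

text \<open>
  Let lam = (2q + h^(z/2)) / (1 + h^(z/2)). The function g below satisfies
  p g(x+1) + q g(x-1) = lam g(x) for x in {0, z} and = g(x) otherwise, so along the walk
  lam^-(number of visits to {0, z} so far) psi(position), with psi = g on {0, z} and g/lam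
  elsewhere, is a martingale, also when stopped at the k-th visit. Taking expectations shows that
  from any starting point at least k visits happen with probability at most lam^(k-1)/s, and
  that from 0 they happen within n steps with probability at least lam^k - O(r^n), where
  r = 2 sqrt(pq) < 1.

  Upper bound: up to time 2^j only O(2^j) shifts of {0, z} can be visited at all, so a union
  bound and Borel-Cantelli give Xi*({0, z}, 2^j) <= (1 + e) kap j ln 2 eventually, with
  kap = -1 / ln lam; monotonicity in n fills the gaps. Lower bound: [0, n] contains n/L disjoint
  blocks of length L ~ C ln n with independent increments. Read as a walk started afresh at its
  initial position, each block visits {0, z} at least (1 - e) kap ln n times with probability of
  order at least n^(e-1), so the probability that no block does is summable.
\<close>

lemma summable_bigo_inverse_square:
  fixes f :: "nat \<Rightarrow> real"
  assumes "f \<in> O(\<lambda>n. 1 / real n ^ 2)"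
  shows "summable f"
proof (rule summable_comparison_test_bigo[OF _ assms])
  show "summable (\<lambda>n. norm (1 / real n ^ 2))"
    using inverse_power_summable[of 2, where 'a = real] by (simp add: divide_inverse)
qed

lemma one_minus_power_le_exp:
  fixes x :: real
  assumes "x \<le> 1"
  shows "(1 - x) ^ n \<le> exp (- (x * real n))"
proof -
  have "(1 - x) ^ n \<le> exp (- x) ^ n"
    using assms exp_ge_add_one_self[of "- x"] by (intro power_mono) auto
  then show ?thesis by (simp add: exp_of_nat_mult[symmetric] mult.commute)
qed

lemma real_div_minus_1_le_div:
  assumes "0 < L"
  shows "real n / real L - 1 \<le> real (n div L)"
proof -
  have "real n = real (n div L) * real L + real (n mod L)"
    by (simp only: of_nat_add[symmetric] of_nat_mult[symmetric] div_mult_mod_eq)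
  moreover have "real (n mod L) < real L" using assms by simp
  ultimately show ?thesis using assms by (simp add: field_simps)
qed

lemma eventually_le_log_of_dyadic:
  fixes F :: "nat \<Rightarrow> real"
  assumes "mono F" and "0 \<le> a"
    and "eventually (\<lambda>j. F (2 ^ j) \<le> a * real j + b) sequentially"
  shows "eventually (\<lambda>n. F n \<le> a * log 2 (real n) + (a + b)) sequentially"
proof -
  obtain J where J: "\<And>j. J \<le> j \<Longrightarrow> F (2 ^ j) \<le> a * real j + b"
    using assms(3) by (auto simp: eventually_sequentially)
  have "F n \<le> a * log 2 (real n) + (a + b)" if n: "max 1 (2 ^ J) \<le> n" for n
  proof -
    define j where "j = nat \<lceil>log 2 (real n)\<rceil>"
    have "real J \<le> log 2 (real n)" using n le_log2_of_power[of J n] by simp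
    then have jJ: "J \<le> j" and j: "real j \<le> log 2 (real n) + 1"
      unfolding j_def by linarith+
    have "0 < n" using n less_le_trans[of 0 "2 ^ J" n] by simp
    moreover have "log 2 (real n) \<le> real j" unfolding j_def by linarith
    ultimately have "real n \<le> 2 powr real j" by (simp add: le_powr_iff)
    then have "n \<le> 2 ^ j" by (simp add: powr_realpow)
    then have "F n \<le> F (2 ^ j)" by (rule monoD[OF assms(1)])
    also have "\<dots> \<le> a * real j + b" by (rule J[OF jJ])
    also have "\<dots> \<le> a * (log 2 (real n) + 1) + b"
      using j assms(2) by (intro add_right_mono mult_left_mono) auto
    finally show ?thesis by (simp add: algebra_simps)
  qed
  then show ?thesis by (auto simp: eventually_sequentially)
qed

lemma AE_tendsto_of_eventually_bounds:
  fixes M :: "'a measure" and f :: "'a \<Rightarrow> nat \<Rightarrow> real"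
  assumes upper: "\<And>e. 0 < e \<Longrightarrow> AE x in M. eventually (\<lambda>n. f x n \<le> c + e) sequentially"
    and lower: "\<And>e. 0 < e \<Longrightarrow> AE x in M. eventually (\<lambda>n. c - e \<le> f x n) sequentially"
  shows "AE x in M. f x \<longlonglongrightarrow> c"
proof -
  have "AE x in M. \<forall>m::nat. eventually (\<lambda>n. f x n \<le> c + inverse (Suc m)) sequentially
      \<and> eventually (\<lambda>n. c - inverse (Suc m) \<le> f x n) sequentially"
    unfolding AE_all_countable using upper lower by (auto intro!: AE_conjI)
  then show ?thesis
  proof eventually_elim
    case (elim x)
    show ?case
    proof (rule order_tendstoI)
      fix a assume "c < a"
      then obtain m where m: "inverse (Suc m) < a - c" using reals_Archimedean[of "a - c"] by auto
      with elim have "eventually (\<lambda>n. f x n \<le> c + inverse (Suc m)) sequentially" by blast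
      then show "eventually (\<lambda>n. f x n < a) sequentially"
        by (rule eventually_mono) (use m in linarith)
    next
      fix a assume "a < c"
      then obtain m where m: "inverse (Suc m) < c - a" using reals_Archimedean[of "c - a"] by auto
      with elim have "eventually (\<lambda>n. c - inverse (Suc m) \<le> f x n) sequentially" by blast
      then show "eventually (\<lambda>n. a < f x n) sequentially"
        by (rule eventually_mono) (use m in linarith)
    qed
  qed
qed

section \<open>Walks with steps \<open>\<plusminus>1\<close>\<close>

definition pm_words :: "nat \<Rightarrow> int list set" where
  "pm_words n = {w. length w = n \<and> set w \<subseteq> {-1, 1}}"

lemma pm_words_0 [simp]: "pm_words 0 = {[]}"
  by (auto simp: pm_words_def)

lemma pm_words_Suc: "pm_words (Suc n) = Cons 1 ` pm_words n \<union> Cons (-1) ` pm_words n"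
  by (auto simp: pm_words_def length_Suc_conv image_iff)

lemma finite_pm_words [simp]: "finite (pm_words n)"
  by (induction n) (auto simp: pm_words_Suc)

lemma length_pm_words: "w \<in> pm_words n \<Longrightarrow> length w = n"
  by (simp add: pm_words_def)

lemma sum_pm_words_Suc:
  "(\<Sum>w\<in>pm_words (Suc n). f w)
    = (\<Sum>w\<in>pm_words n. f (1 # w)) + (\<Sum>w\<in>pm_words n. f (-1 # w))"
proof -
  have "(\<Sum>w\<in>pm_words (Suc n). f w)
      = (\<Sum>w\<in>Cons 1 ` pm_words n. f w) + (\<Sum>w\<in>Cons (-1) ` pm_words n. f w)"
    unfolding pm_words_Suc by (rule sum.union_disjoint) auto
  also have "\<dots> = (\<Sum>w\<in>pm_words n. f (1 # w)) + (\<Sum>w\<in>pm_words n. f (-1 # w))"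
    by (subst (1 2) sum.reindex) auto
  finally show ?thesis .
qed

lemma sum_pm_words_add:
  "(\<Sum>w\<in>pm_words (m + l). f w) = (\<Sum>u\<in>pm_words m. \<Sum>v\<in>pm_words l. f (u @ v))"
  by (induction m arbitrary: f) (simp_all add: sum_pm_words_Suc)

definition block :: "nat \<Rightarrow> nat \<Rightarrow> 'a list \<Rightarrow> 'a list" where
  "block L b w = take L (drop (b * L) w)"

lemma block_append:
  assumes "length u = L"
  shows "block L 0 (u @ v) = u" and "block L (Suc b) (u @ v) = block L b v"
  using assms by (simp_all add: block_def)

fun visits :: "int set \<Rightarrow> int \<Rightarrow> int list \<Rightarrow> nat" where
  "visits A x [] = 0"
| "visits A x (e # w) = of_bool (x + e \<in> A) + visits A (x + e) w"

lemma visits_snoc: "visits A x (w @ [e]) = visits A x w + of_bool (x + sum_list w + e \<in> A)"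
  by (induction w arbitrary: x) (simp_all add: add.assoc)

locale biased_walk =
  fixes p q :: real
  assumes q_pos: "0 < q" and q_less_p: "q < p" and p_plus_q: "p + q = 1"
begin

definition "h = q / p"
definition "r = 2 * sqrt (p * q)"

lemma p_pos: "0 < p"
  using q_pos q_less_p by simp

lemma p_mult_plus_q_mult: "p * t + q * t = t"
  using p_plus_q by (metis distrib_right mult_1)

lemma h_pos: "0 < h" and h_less_1: "h < 1"
  using q_pos q_less_p p_pos by (auto simp: h_def)

lemma r_pos: "0 < r"
  using p_pos q_pos by (simp add: r_def)

lemma r_less_1: "r < 1"
proof -
  have "r ^ 2 = (p + q) ^ 2 - (p - q) ^ 2"
    using p_pos q_pos by (simp add: r_def power_mult_distrib algebra_simps power2_eq_square)
  also have "\<dots> < 1" using q_less_p p_plus_q by simp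
  finally show ?thesis using r_pos by (simp add: power_less_one_iff)
qed

lemma ex_r_power_le:
  assumes "0 < c"
  shows "\<exists>m\<ge>1. r ^ m \<le> c"
proof -
  have "(\<lambda>n. r ^ n) \<longlonglongrightarrow> 0" using r_pos r_less_1 by (intro LIMSEQ_power_zero) simp
  then have "eventually (\<lambda>n. r ^ n < c) sequentially" using assms by (rule order_tendstoD)
  then obtain N where N: "\<And>n. N \<le> n \<Longrightarrow> r ^ n < c" by (auto simp: eventually_sequentially)
  have "r ^ (N + 1) \<le> c" using N[of "N + 1"] by simp
  then show ?thesis by (intro exI[of _ "N + 1"]) auto
qed

definition word_prob :: "int list \<Rightarrow> real" where
  "word_prob w = (\<Prod>e\<leftarrow>w. if e = 1 then p else q)"

lemma word_prob_Nil [simp]: "word_prob [] = 1"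
  and word_prob_Cons [simp]: "word_prob (e # w) = (if e = 1 then p else q) * word_prob w"
  and word_prob_append: "word_prob (u @ v) = word_prob u * word_prob v"
  by (simp_all add: word_prob_def)

lemma word_prob_nonneg: "0 \<le> word_prob w"
  using p_pos q_pos by (induction w) auto

lemma sum_word_prob: "(\<Sum>w\<in>pm_words n. word_prob w) = 1"
  by (induction n) (simp_all add: sum_pm_words_Suc flip: sum_distrib_left add: p_plus_q)

lemma sum_word_prob_blocks:
  "(\<Sum>w\<in>pm_words (B * L). word_prob w * (\<Prod>b<B. f (block L b w)))
    = (\<Sum>u\<in>pm_words L. word_prob u * f u) ^ B"
proof (induction B)
  case (Suc B)
  have "(\<Sum>w\<in>pm_words (Suc B * L). word_prob w * (\<Prod>b<Suc B. f (block L b w)))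
      = (\<Sum>u\<in>pm_words L. \<Sum>v\<in>pm_words (B * L).
           word_prob (u @ v) * (\<Prod>b<Suc B. f (block L b (u @ v))))"
    using sum_pm_words_add[where m = L and l = "B * L"] by simp
  also have "\<dots> = (\<Sum>u\<in>pm_words L. \<Sum>v\<in>pm_words (B * L).
                    (word_prob u * f u) * (word_prob v * (\<Prod>b<B. f (block L b v))))"
    by (intro sum.cong refl)
       (simp only: word_prob_append prod.lessThan_Suc_shift, simp add: block_append length_pm_words)
  also have "\<dots> = (\<Sum>u\<in>pm_words L. word_prob u * f u)
                  * (\<Sum>v\<in>pm_words (B * L). word_prob v * (\<Prod>b<B. f (block L b v)))"
    by (simp add: sum_product)
  finally show ?case using Suc.IH by simp
qed simp

lemma sum_word_prob_sqrt_h_powr: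
  "(\<Sum>w\<in>pm_words n. word_prob w * sqrt h powr (x + sum_list w)) = sqrt h powr x * r ^ n"
proof (induction n arbitrary: x)
  case (Suc n)
  have sq: "p * sqrt h = sqrt (p * q)" "q / sqrt h = sqrt (p * q)"
    using p_pos q_pos by (simp_all add: h_def real_sqrt_divide real_sqrt_mult field_simps)
  have "(\<Sum>w\<in>pm_words (Suc n). word_prob w * sqrt h powr (x + sum_list w))
     = p * (\<Sum>w\<in>pm_words n. word_prob w * sqrt h powr ((x + 1) + sum_list w))
       + q * (\<Sum>w\<in>pm_words n. word_prob w * sqrt h powr ((x - 1) + sum_list w))"
    by (simp add: sum_pm_words_Suc sum_distrib_left algebra_simps)
  also have "\<dots> = p * (sqrt h powr (x + 1) * r ^ n) + q * (sqrt h powr (x - 1) * r ^ n)"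
    by (simp only: Suc.IH)
  also have "\<dots> = sqrt h powr x * r ^ n * (p * sqrt h + q / sqrt h)"
    using h_pos by (simp add: powr_add powr_diff algebra_simps)
  finally show ?case using sq by (simp add: r_def)
qed simp

definition walk_prob :: "nat \<Rightarrow> (int list \<Rightarrow> bool) \<Rightarrow> real" where
  "walk_prob n P = (\<Sum>w | w \<in> pm_words n \<and> P w. word_prob w)"

lemma walk_prob_eq_sum: "walk_prob n P = (\<Sum>w\<in>pm_words n. word_prob w * of_bool (P w))"
  by (simp add: walk_prob_def Int_def conj_commute)

lemma walk_prob_nonneg: "0 \<le> walk_prob n P"
  unfolding walk_prob_def by (intro sum_nonneg) (simp add: word_prob_nonneg)

lemma walk_prob_Not: "walk_prob n (\<lambda>w. \<not> P w) = 1 - walk_prob n P"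
proof -
  have "walk_prob n (\<lambda>w. \<not> P w)
      = (\<Sum>w\<in>pm_words n. word_prob w - word_prob w * of_bool (P w))"
    unfolding walk_prob_eq_sum by (intro sum.cong) auto
  then show ?thesis by (simp only: sum_subtractf sum_word_prob walk_prob_eq_sum)
qed

lemma walk_prob_le_1: "walk_prob n P \<le> 1"
  using walk_prob_Not[of n P] walk_prob_nonneg[of n "\<lambda>w. \<not> P w"] by simp

lemma walk_prob_blocks:
  "walk_prob (B * L) (\<lambda>w. \<forall>b<B. P (block L b w)) = walk_prob L P ^ B"
proof -
  have "(\<Prod>b<B. of_bool (P (block L b w))) = (of_bool (\<forall>b<B. P (block L b w)) :: real)" for w
    by (induction B) (auto simp: less_Suc_eq)
  then show ?thesis
    using sum_word_prob_blocks[where B = B and L = L and f = "\<lambda>u. of_bool (P u)"]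
    by (simp only: walk_prob_eq_sum)
qed

lemma walk_prob_bex_le:
  assumes "finite I"
  shows "walk_prob n (\<lambda>w. \<exists>a\<in>I. P a w) \<le> (\<Sum>a\<in>I. walk_prob n (P a))"
proof -
  have "of_bool (\<exists>a\<in>I. P a w) \<le> (\<Sum>a\<in>I. of_bool (P a w) :: real)" for w
  proof (cases "\<exists>a\<in>I. P a w")
    case True
    then obtain a where "a \<in> I" "P a w" by blast
    then have "of_bool (P a w) \<le> (\<Sum>a\<in>I. of_bool (P a w) :: real)"
      using assms by (intro member_le_sum) auto
    then show ?thesis using True \<open>P a w\<close> by simp
  qed (simp add: sum_nonneg)
  then have "walk_prob n (\<lambda>w. \<exists>a\<in>I. P a w)
      \<le> (\<Sum>w\<in>pm_words n. word_prob w * (\<Sum>a\<in>I. of_bool (P a w)))"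
    unfolding walk_prob_eq_sum by (intro sum_mono mult_left_mono) (auto simp: word_prob_nonneg)
  also have "\<dots> = (\<Sum>a\<in>I. walk_prob n (P a))"
    unfolding walk_prob_eq_sum sum_distrib_left by (rule sum.swap)
  finally show ?thesis .
qed

end

section \<open>A martingale counting the visits to \<open>{0, z}\<close>\<close>

locale two_point_walk = biased_walk +
  fixes z :: int
  assumes z_pos: "0 < z"
begin

definition "s = h powr (real_of_int z / 2)"
definition "lam = (2 * q + s) / (1 + s)"

lemma s_pos: "0 < s"
  using h_pos by (simp add: s_def)

lemma s_less_1: "s < 1"
  using h_pos h_less_1 z_pos powr_less_mono'[of h 0 "real_of_int z / 2"] by (auto simp: s_def)

lemma s_square: "s * s = h powr z"
  using h_pos by (simp add: s_def flip: powr_add)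

lemma lam_pos: "0 < lam" and lam_less_1: "lam < 1"
  using s_pos q_pos q_less_p p_plus_q by (auto simp: lam_def field_simps)

text \<open>The functions 1 and h^x are harmonic for the walk (harmonic_affine), and g is glued from
  such functions on the three pieces cut out by 0 and z. So g is harmonic away from 0 and z, and
  s = h^(z/2) is exactly the choice for which the defects at 0 and at z are the same factor lam
  (g_harmonic_0, g_harmonic_z).\<close>

definition g :: "int \<Rightarrow> real" where
  "g x = (if x \<le> 0 then 1 else if x \<le> z then (s + h powr x) / (1 + s) else h powr x / s)"

definition psi :: "int \<Rightarrow> real" where
  "psi x = (if x \<in> {0, z} then g x else g x / lam)"

lemma g_left: "x \<le> 0 \<Longrightarrow> g x = 1"
  by (simp add: g_def)

lemma g_mid: "0 \<le> x \<Longrightarrow> x \<le> z \<Longrightarrow> g x = (s + h powr x) / (1 + s)"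
  using s_pos h_pos by (auto simp: g_def)

lemma g_right: "z \<le> x \<Longrightarrow> g x = h powr x / s"
proof (cases "x = z")
  case True
  then show ?thesis using z_pos s_pos s_square by (simp add: g_def field_simps)
qed (use z_pos in \<open>auto simp: g_def\<close>)

lemma g_z: "g z = s"
  using g_right[of z] s_pos by (simp add: s_square[symmetric])

lemma harmonic_affine:
  "p * (a + b * h powr (x + 1)) + q * (a + b * h powr (x - 1)) = a + b * h powr x"
proof -
  have "p * (a + b * h powr (x + 1)) + q * (a + b * h powr (x - 1))
      = (p + q) * a + b * h powr x * (p * h + q / h)"
    using h_pos by (simp add: powr_add powr_diff algebra_simps)
  also have "p * h + q / h = 1" using p_pos q_pos p_plus_q by (simp add: h_def)
  finally show ?thesis using p_plus_q by simp
qed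

lemma g_harmonic_0: "p * g 1 + q * g (-1) = lam"
proof -
  have "p * s + q * s = s" by (rule p_mult_plus_q_mult)
  moreover have "p * h = q" using p_pos by (simp add: h_def)
  ultimately have "p * (s + h) + q * (1 + s) = 2 * q + s"
    unfolding distrib_left by linarith
  moreover have "g 1 = (s + h) / (1 + s)" using z_pos h_pos by (simp add: g_mid)
  ultimately show ?thesis using s_pos by (simp add: g_left lam_def field_simps)
qed

lemma g_harmonic_z: "p * g (z + 1) + q * g (z - 1) = lam * s"
proof -
  have "p * g (z + 1) = q * s"
  proof -
    have "p * g (z + 1) = (p * h) * (s * s) / s"
      using h_pos by (simp add: g_right powr_add s_square)
    then show ?thesis using p_pos s_pos by (simp add: h_def)
  qed
  moreover have "q * g (z - 1) = (q * s + p * (s * s)) / (1 + s)"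
  proof -
    have "q * (s + h powr (z - 1)) = q * s + (q / h) * (s * s)"
      using h_pos by (simp add: powr_diff s_square algebra_simps)
    then show ?thesis using z_pos p_pos q_pos by (simp add: g_mid h_def)
  qed
  ultimately have "p * g (z + 1) + q * g (z - 1) = (q * s * (1 + s) + (q * s + p * (s * s))) / (1 + s)"
    using s_pos by (simp add: field_simps)
  also have "q * s * (1 + s) + (q * s + p * (s * s)) = (2 * q + s) * s"
    using p_mult_plus_q_mult[of "s * s"] by (simp add: algebra_simps)
  finally show ?thesis by (simp add: lam_def)
qed

lemma g_harmonic: "p * g (x + 1) + q * g (x - 1) = lam * psi x"
proof -
  consider "x < 0" | "x = 0" | "0 < x" "x < z" | "x = z" | "z < x" by linarith
  then show ?thesis
  proof cases
    case 1
    then show ?thesis using lam_pos p_plus_q z_pos by (simp add: g_left psi_def)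
  next
    case 2
    then show ?thesis using g_harmonic_0 by (simp add: g_left psi_def)
  next
    case 3
    have "g y = s / (1 + s) + 1 / (1 + s) * h powr y" if "x - 1 \<le> y" "y \<le> x + 1" for y
      using 3 that by (simp add: g_mid add_divide_distrib)
    then show ?thesis
      using 3 lam_pos harmonic_affine[of "s / (1 + s)" "1 / (1 + s)" x] by (simp add: psi_def)
  next
    case 4
    then show ?thesis using g_harmonic_z by (simp add: psi_def g_z)
  next
    case 5
    have "g y = 0 + 1 / s * h powr y" if "x - 1 \<le> y" for y
      using 5 that by (simp add: g_right)
    then show ?thesis
      using 5 z_pos lam_pos harmonic_affine[of 0 "1 / s" x] by (simp add: psi_def)
  qed
qed

lemma g_pos: "0 < g x"
  using s_pos h_pos by (auto simp: g_def intro!: add_pos_pos divide_pos_pos)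

lemma g_le_1: "g x \<le> 1"
proof -
  consider "x \<le> 0" | "0 < x" "x \<le> z" | "z < x" by linarith
  then show ?thesis
  proof cases
    case 2
    have "h powr x \<le> h powr 0" using h_pos h_less_1 2 by (intro powr_mono') auto
    then show ?thesis using 2 h_pos s_pos by (simp add: g_mid field_simps)
  next
    case 3
    have "h powr x \<le> h powr z" using h_pos h_less_1 3 by (intro powr_mono') auto
    then have "h powr x / s \<le> s" using s_pos by (simp add: s_square[symmetric] field_simps)
    then show ?thesis using 3 s_less_1 by (simp add: g_right)
  qed (simp add: g_left)
qed

lemma g_le_sqrt_h_powr: "g x \<le> 2 * sqrt h powr x"
proof -
  have sqrt_h: "sqrt h powr y = h powr (y / 2)" for y
    using h_pos by (simp add: powr_powr flip: powr_half_sqrt)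
  consider "x \<le> 0" | "0 < x" "x \<le> z" | "z < x" by linarith
  then show ?thesis
  proof cases
    case 1
    have "h powr 0 \<le> h powr (x / 2)" using h_pos h_less_1 1 by (intro powr_mono') auto
    then show ?thesis using 1 h_pos by (simp add: g_left sqrt_h)
  next
    case 2
    have "h powr x \<le> h powr (x / 2)" and "s \<le> h powr (x / 2)"
      using h_pos h_less_1 2 unfolding s_def by (auto intro: powr_mono')
    moreover have "(s + h powr x) / (1 + s) \<le> s + h powr x"
      using s_pos h_pos by (simp add: field_simps add_increasing2)
    ultimately show ?thesis using 2 by (simp add: g_mid sqrt_h)
  next
    case 3
    have "h powr x / s = h powr (x - z / 2)" using h_pos by (simp add: s_def powr_diff)
    also have "\<dots> \<le> h powr (x / 2)" using h_pos h_less_1 3 by (intro powr_mono') auto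
    finally have "g x \<le> h powr (x / 2)" using 3 by (simp add: g_right)
    moreover have "0 \<le> h powr (x / 2)" by simp
    ultimately show ?thesis unfolding sqrt_h by linarith
  qed
qed

lemma psi_pos: "0 < psi x"
  using g_pos lam_pos by (simp add: psi_def)

lemma psi_0: "psi 0 = 1" and psi_z: "psi z = s"
  by (simp_all add: psi_def g_left g_z)

lemma psi_le_g_div_lam: "psi x \<le> g x / lam"
  using g_pos[of x] lam_pos lam_less_1 by (auto simp: psi_def field_simps)

lemma psi_le_inverse_lam: "psi x \<le> 1 / lam"
  by (rule order_trans[OF psi_le_g_div_lam divide_right_mono[OF g_le_1]]) (use lam_pos in simp)

lemma psi_le_sqrt_h_powr: "psi x \<le> 2 * sqrt h powr x / lam"
  by (rule order_trans[OF psi_le_g_div_lam divide_right_mono[OF g_le_sqrt_h_powr]])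
     (use lam_pos in simp)

text \<open>stopped_mart k x w is the final value of lam^-(visits so far) psi(position) along the walk
  from x with steps w, stopped at the k-th visit to {0, z}.\<close>

fun stopped_mart :: "nat \<Rightarrow> int \<Rightarrow> int list \<Rightarrow> real" where
  "stopped_mart k x [] = psi x"
| "stopped_mart k x (e # w) =
    (if x + e \<in> {0, z} then (if k \<le> 1 then psi (x + e) else stopped_mart (k - 1) (x + e) w) / lam
     else stopped_mart k (x + e) w)"

lemma sum_word_prob_stopped_mart:
  assumes "1 \<le> k"
  shows "(\<Sum>w\<in>pm_words n. word_prob w * stopped_mart k x w) = psi x"
  using assms
proof (induction n arbitrary: k x)
  case (Suc n)
  have step: "(\<Sum>w\<in>pm_words n. word_prob w * stopped_mart k x (e # w)) = g (x + e) / lam" for e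
  proof (cases "x + e \<in> {0, z}")
    case True
    have "(\<Sum>w\<in>pm_words n. word_prob w * stopped_mart k x (e # w)) = psi (x + e) / lam"
    proof (cases "k \<le> 1")
      case True
      then show ?thesis using \<open>x + e \<in> {0, z}\<close>
        by (simp add: sum_word_prob flip: sum_distrib_right times_divide_eq_right)
    next
      case False
      then have "(\<Sum>w\<in>pm_words n. word_prob w * stopped_mart (k - 1) (x + e) w) = psi (x + e)"
        by (intro Suc.IH) simp
      then show ?thesis using False \<open>x + e \<in> {0, z}\<close>
        by (simp add: sum_divide_distrib[symmetric])
    qed
    then show ?thesis using True by (simp add: psi_def)
  next
    case False
    then show ?thesis using Suc by (simp add: psi_def)
  qed
  have "(\<Sum>w\<in>pm_words (Suc n). word_prob w * stopped_mart k x w)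
      = p * (\<Sum>w\<in>pm_words n. word_prob w * stopped_mart k x (1 # w))
        + q * (\<Sum>w\<in>pm_words n. word_prob w * stopped_mart k x (-1 # w))"
    by (simp add: sum_pm_words_Suc sum_distrib_left mult.assoc del: stopped_mart.simps)
  also have "\<dots> = (p * g (x + 1) + q * g (x - 1)) / lam"
    by (simp only: step add_divide_distrib times_divide_eq_right diff_conv_add_uminus)
  also have "\<dots> = psi x" using g_harmonic[of x] lam_pos by simp
  finally show ?case .
qed simp

lemma stopped_mart_nonneg: "0 \<le> stopped_mart k x w"
  using psi_pos lam_pos by (induction k x w rule: stopped_mart.induct) (auto simp: less_imp_le)

lemma stopped_mart_if_visits_ge:
  assumes "1 \<le> k" "k \<le> visits {0, z} x w"
  shows "s / lam ^ k \<le> stopped_mart k x w" and "stopped_mart k x w \<le> 1 / lam ^ k"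
proof -
  have "s / lam ^ k \<le> stopped_mart k x w \<and> stopped_mart k x w \<le> 1 / lam ^ k"
    using assms
  proof (induction w arbitrary: k x)
    case (Cons e w)
    show ?case
    proof (cases "x + e \<in> {0, z}")
      case True
      show ?thesis
      proof (cases "k \<le> 1")
        case True
        have "s \<le> psi (x + e) \<and> psi (x + e) \<le> 1"
          using \<open>x + e \<in> {0, z}\<close> psi_0 psi_z s_less_1 by auto
        then show ?thesis using True Cons.prems \<open>x + e \<in> {0, z}\<close> lam_pos
          by (auto simp: divide_le_cancel)
      next
        case False
        then have "s / lam ^ (k - 1) \<le> stopped_mart (k - 1) (x + e) w
            \<and> stopped_mart (k - 1) (x + e) w \<le> 1 / lam ^ (k - 1)"
          using Cons \<open>x + e \<in> {0, z}\<close> by (intro Cons.IH) auto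
        moreover have "lam ^ k = lam ^ (k - 1) * lam" using False
          by (simp flip: power_Suc2)
        ultimately show ?thesis using True False lam_pos
          by (auto simp: divide_right_mono simp flip: divide_divide_eq_left)
      qed
    next
      case False
      then show ?thesis using Cons by simp
    qed
  qed simp
  then show "s / lam ^ k \<le> stopped_mart k x w" and "stopped_mart k x w \<le> 1 / lam ^ k" by simp_all
qed

lemma stopped_mart_if_visits_less:
  assumes "1 \<le> k" "visits {0, z} x w < k"
  shows "stopped_mart k x w = psi (x + sum_list w) / lam ^ visits {0, z} x w"
  using assms
proof (induction w arbitrary: k x)
  case (Cons e w)
  show ?case
  proof (cases "x + e \<in> {0, z}")
    case True
    then have "stopped_mart (k - 1) (x + e) w = psi (x + e + sum_list w) / lam ^ visits {0, z} (x + e) w"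
      using Cons by (intro Cons.IH) auto
    then show ?thesis using True Cons.prems by (simp add: add.assoc)
  next
    case False
    then show ?thesis using Cons by (simp add: add.assoc)
  qed
qed simp

lemma walk_prob_visits_ge_le:
  assumes "1 \<le> k"
  shows "walk_prob n (\<lambda>w. k \<le> visits {0, z} x w) \<le> lam ^ k / (lam * s)"
proof -
  have "s / lam ^ k * walk_prob n (\<lambda>w. k \<le> visits {0, z} x w)
      = (\<Sum>w\<in>pm_words n. word_prob w * (s / lam ^ k * of_bool (k \<le> visits {0, z} x w)))"
    unfolding walk_prob_eq_sum sum_distrib_left by (simp add: mult_ac)
  also have "\<dots> \<le> (\<Sum>w\<in>pm_words n. word_prob w * stopped_mart k x w)"
    using stopped_mart_if_visits_ge(1)[OF assms] stopped_mart_nonneg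
    by (intro sum_mono mult_left_mono) (auto simp: word_prob_nonneg)
  also have "\<dots> = psi x" by (rule sum_word_prob_stopped_mart[OF assms])
  also have "\<dots> \<le> 1 / lam" by (rule psi_le_inverse_lam)
  finally show ?thesis using s_pos lam_pos by (simp add: field_simps)
qed

lemma stopped_mart_le:
  assumes "1 \<le> k"
  shows "stopped_mart k x w
    \<le> (of_bool (k \<le> visits {0, z} x w) + 2 / lam * sqrt h powr (x + sum_list w)) / lam ^ k"
proof (cases "k \<le> visits {0, z} x w")
  case True
  have "0 \<le> 2 / lam * sqrt h powr (x + sum_list w) / lam ^ k" using lam_pos by simp
  then show ?thesis
    using stopped_mart_if_visits_ge(2)[OF assms True] True by (simp add: add_divide_distrib)
next
  case False
  then have "stopped_mart k x w = psi (x + sum_list w) / lam ^ visits {0, z} x w"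
    using stopped_mart_if_visits_less[OF assms] by simp
  also have "\<dots> \<le> psi (x + sum_list w) / lam ^ k"
    using psi_pos[of "x + sum_list w"] lam_pos lam_less_1 False
    by (intro divide_left_mono mult_pos_pos power_decreasing) auto
  also have "\<dots> \<le> (2 / lam * sqrt h powr (x + sum_list w)) / lam ^ k"
    using psi_le_sqrt_h_powr[of "x + sum_list w"] lam_pos by (intro divide_right_mono) auto
  finally show ?thesis using False by simp
qed

lemma walk_prob_visits_ge_ge:
  assumes "1 \<le> k"
  shows "lam ^ k - 2 * r ^ n / lam \<le> walk_prob n (\<lambda>w. k \<le> visits {0, z} 0 w)"
proof -
  let ?V = "\<lambda>w. visits {0, z} 0 w"
  have "1 = (\<Sum>w\<in>pm_words n. word_prob w * stopped_mart k 0 w)"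
    using sum_word_prob_stopped_mart[OF assms] psi_0 by simp
  also have "\<dots> \<le> (\<Sum>w\<in>pm_words n. word_prob w *
      ((of_bool (k \<le> ?V w) + 2 / lam * sqrt h powr (0 + sum_list w)) / lam ^ k))"
    using stopped_mart_le[OF assms, of 0] word_prob_nonneg by (intro sum_mono mult_left_mono) auto
  also have "\<dots> = walk_prob n (\<lambda>w. k \<le> ?V w) / lam ^ k
      + 2 / lam / lam ^ k * (\<Sum>w\<in>pm_words n. word_prob w * sqrt h powr (0 + sum_list w))"
  proof -
    have "word_prob w * ((of_bool (k \<le> ?V w) + 2 / lam * sqrt h powr (0 + sum_list w)) / lam ^ k)
        = word_prob w * of_bool (k \<le> ?V w) / lam ^ k
          + 2 / lam / lam ^ k * (word_prob w * sqrt h powr (0 + sum_list w))" for w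
      using lam_pos by (simp add: field_simps)
    then show ?thesis
      unfolding walk_prob_eq_sum
      by (simp only: sum.distrib sum_divide_distrib[symmetric] sum_distrib_left[symmetric])
  qed
  also have "\<dots> = walk_prob n (\<lambda>w. k \<le> ?V w) / lam ^ k + 2 / lam / lam ^ k * r ^ n"
    using h_pos by (simp only: sum_word_prob_sqrt_h_powr) simp
  finally show ?thesis using lam_pos by (simp add: field_simps)
qed

definition "kap = - 1 / ln lam"

lemma kap_pos: "0 < kap"
  using lam_pos lam_less_1 by (simp add: kap_def)

lemma lam_powr_kap: "lam powr (kap * t) = exp (- t)"
  using lam_pos lam_less_1 by (simp add: powr_def kap_def)

lemma lam_power_le_exp: "kap * t \<le> real k \<Longrightarrow> lam ^ k \<le> exp (- t)"
  using lam_pos lam_less_1 powr_mono'[of "kap * t" "real k" lam]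
  by (simp add: powr_realpow lam_powr_kap)

lemma lam_power_ge_exp:
  assumes "real k \<le> kap * t + 1"
  shows "lam * exp (- t) \<le> lam ^ k"
proof -
  have "lam * exp (- t) = lam powr (kap * t) * lam powr 1"
    using lam_pos by (simp add: lam_powr_kap)
  also have "\<dots> = lam powr (kap * t + 1)" by (rule powr_add[symmetric])
  also have "\<dots> \<le> lam powr real k"
    using assms lam_pos lam_less_1 by (intro powr_mono') auto
  also have "\<dots> = lam ^ k" using lam_pos by (simp add: powr_realpow)
  finally show ?thesis .
qed

lemma walk_prob_visits_ge_block:
  assumes "r ^ c0 \<le> lam" and "r ^ c1 \<le> lam / 4" and "1 \<le> k"
  shows "lam ^ k / 2 \<le> walk_prob (c0 * (k + 1) + c1) (\<lambda>u. k \<le> visits {0, z} 0 u)"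
proof -
  have "r ^ (c0 * (k + 1) + c1) = (r ^ c0) ^ (k + 1) * r ^ c1"
    by (simp add: power_add power_mult)
  also have "\<dots> \<le> lam ^ (k + 1) * (lam / 4)"
    using assms r_pos lam_pos by (intro mult_mono power_mono) auto
  finally have "2 * r ^ (c0 * (k + 1) + c1) / lam \<le> lam ^ k * lam / 2"
    using lam_pos by (simp add: field_simps)
  also have "\<dots> \<le> lam ^ k / 2"
    using lam_pos lam_less_1 by (simp add: field_simps)
  finally show ?thesis
    using walk_prob_visits_ge_ge[OF assms(3), of "c0 * (k + 1) + c1"] by linarith
qed

end

section \<open>Occupation times of a sample path\<close>

definition walk_steps :: "(nat \<Rightarrow> 'a \<Rightarrow> int) \<Rightarrow> nat \<Rightarrow> 'a \<Rightarrow> int list" where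
  "walk_steps X n \<omega> = map (\<lambda>i. X i \<omega>) [0..<n]"

lemma rw_S_shift: "rw_S (\<lambda>i. X (m + i)) t \<omega> = rw_S X (m + t) \<omega> - rw_S X m \<omega>"
  by (induction t) (auto simp: rw_S_def)

lemma visits_walk_steps:
  "visits A x (walk_steps X n \<omega>) = card {t \<in> {1..n}. x + rw_S X t \<omega> \<in> A}"
proof (induction n)
  case (Suc n)
  have "walk_steps X (Suc n) \<omega> = walk_steps X n \<omega> @ [X n \<omega>]"
    by (simp add: walk_steps_def)
  moreover have "sum_list (walk_steps X n \<omega>) = rw_S X n \<omega>"
    by (simp add: walk_steps_def rw_S_def sum_list_sum_nth atLeast0LessThan)
  moreover have "{t \<in> {1..Suc n}. x + rw_S X t \<omega> \<in> A}
      = (if x + rw_S X (Suc n) \<omega> \<in> A then insert (Suc n) else id)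
          {t \<in> {1..n}. x + rw_S X t \<omega> \<in> A}"
    by (auto simp: le_Suc_eq)
  ultimately show ?case using Suc.IH by (simp add: visits_snoc rw_S_def add.assoc)
qed (simp add: walk_steps_def)

lemma block_walk_steps:
  assumes "b < B"
  shows "block L b (walk_steps X (B * L) \<omega>) = walk_steps (\<lambda>i. X (b * L + i)) L \<omega>"
proof -
  have "b * L + L \<le> B * L" using assms mult_le_mono1[of "Suc b" B L] by simp
  then show ?thesis
    by (simp add: block_def walk_steps_def drop_map take_map map_add_upt[symmetric] add.commute)
qed

lemma abs_rw_S_le: "(\<And>i. X i \<omega> \<in> {-1, 1}) \<Longrightarrow> \<bar>rw_S X t \<omega>\<bar> \<le> int t"
proof (induction t)
  case (Suc t)
  have "X t \<omega> \<in> {-1, 1}" by (rule Suc.prems)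
  then have "\<bar>X t \<omega>\<bar> = 1" by auto
  then show ?case using Suc by (simp add: rw_S_def)
qed (simp add: rw_S_def)

lemma rw_Xi_eq_card:
  assumes "finite A"
  shows "rw_Xi X A n \<omega> = card {t \<in> {1..n}. rw_S X t \<omega> \<in> A}"
proof -
  have "{t \<in> {1..n}. rw_S X t \<omega> \<in> A} = (\<Union>y\<in>A. {t \<in> {1..n}. rw_S X t \<omega> = y})" by auto
  then show ?thesis
    using assms by (simp add: rw_Xi_def rw_xi_def card_UN_disjoint disjoint_iff)
qed

context
  fixes A :: "int set"
  assumes finite_A: "finite A"
begin

lemma rw_Xi_shift_eq_visits:
  "rw_Xi X ((\<lambda>x. x + a) ` A) n \<omega> = visits A (- a) (walk_steps X n \<omega>)"
  using finite_A unfolding rw_Xi_eq_card[OF finite_imageI[OF finite_A]] visits_walk_steps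
  by (intro arg_cong[where f = card]) force

lemma rw_Xi_shift_le: "rw_Xi X ((\<lambda>x. x + a) ` A) n \<omega> \<le> n"
proof -
  have "card {t \<in> {1..n}. - a + rw_S X t \<omega> \<in> A} \<le> card {1..n}" by (intro card_mono) auto
  then show ?thesis by (simp only: rw_Xi_shift_eq_visits visits_walk_steps) simp
qed

lemma bdd_above_rw_Xi_shift: "bdd_above (range (\<lambda>a. rw_Xi X ((\<lambda>x. x + a) ` A) n \<omega>))"
  using rw_Xi_shift_le by (intro bdd_aboveI) auto

lemma rw_Xi_le_rw_Xi_star: "rw_Xi X ((\<lambda>x. x + a) ` A) n \<omega> \<le> rw_Xi_star X A n \<omega>"
  unfolding rw_Xi_star_def by (rule cSup_upper[OF _ bdd_above_rw_Xi_shift]) auto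

lemma rw_Xi_star_attained: "\<exists>a. rw_Xi_star X A n \<omega> = rw_Xi X ((\<lambda>x. x + a) ` A) n \<omega>"
proof -
  let ?R = "range (\<lambda>a. rw_Xi X ((\<lambda>x. x + a) ` A) n \<omega>)"
  have "finite ?R" using bdd_above_rw_Xi_shift by (simp add: bdd_above_nat)
  then have "Sup ?R \<in> ?R" by (simp add: cSup_eq_Max)
  then show ?thesis by (auto simp: rw_Xi_star_def)
qed

lemma mono_rw_Xi_star: "mono (\<lambda>n. rw_Xi_star X A n \<omega>)"
proof
  fix n n' :: nat assume "n \<le> n'"
  obtain a where a: "rw_Xi_star X A n \<omega> = rw_Xi X ((\<lambda>x. x + a) ` A) n \<omega>"
    using rw_Xi_star_attained[where X = X and n = n and \<omega> = \<omega>] by blast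
  have "rw_Xi X ((\<lambda>x. x + a) ` A) n \<omega> \<le> rw_Xi X ((\<lambda>x. x + a) ` A) n' \<omega>"
    using \<open>n \<le> n'\<close> unfolding rw_Xi_shift_eq_visits visits_walk_steps
    by (intro card_mono) auto
  then show "rw_Xi_star X A n \<omega> \<le> rw_Xi_star X A n' \<omega>"
    using a rw_Xi_le_rw_Xi_star[where a = a and n = n' and X = X and \<omega> = \<omega>] by linarith
qed

lemma visits_block_le_rw_Xi_star:
  assumes "b < B" and "B * L \<le> n"
  shows "visits A 0 (block L b (walk_steps X (B * L) \<omega>)) \<le> rw_Xi_star X A n \<omega>"
proof -
  define a where "a = rw_S X (b * L) \<omega>"
  have "b * L + L \<le> n" using assms mult_le_mono1[of "Suc b" B L] by simp
  then have "(\<lambda>t. b * L + t) ` {t \<in> {1..L}. rw_S X (b * L + t) \<omega> - a \<in> A}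
      \<subseteq> {t \<in> {1..n}. - a + rw_S X t \<omega> \<in> A}"
    by auto
  then have "card ((\<lambda>t. b * L + t) ` {t \<in> {1..L}. rw_S X (b * L + t) \<omega> - a \<in> A})
      \<le> card {t \<in> {1..n}. - a + rw_S X t \<omega> \<in> A}"
    by (intro card_mono) auto
  then have "card {t \<in> {1..L}. rw_S X (b * L + t) \<omega> - a \<in> A}
      \<le> card {t \<in> {1..n}. - a + rw_S X t \<omega> \<in> A}"
    by (simp add: card_image)
  then have "visits A 0 (block L b (walk_steps X (B * L) \<omega>)) \<le> rw_Xi X ((\<lambda>x. x + a) ` A) n \<omega>"
    using assms(1) by (simp add: block_walk_steps visits_walk_steps rw_S_shift a_def
        rw_Xi_shift_eq_visits)
  also have "\<dots> \<le> rw_Xi_star X A n \<omega>" by (rule rw_Xi_le_rw_Xi_star)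
  finally show ?thesis .
qed

lemma rw_Xi_star_ge_imp_visits:
  assumes "A \<subseteq> {0..d}" and "\<And>i. X i \<omega> \<in> {-1, 1}"
    and "1 \<le> k" and "k \<le> rw_Xi_star X A n \<omega>"
  shows "\<exists>a\<in>{- int n - d..int n}. k \<le> visits A (- a) (walk_steps X n \<omega>)"
proof -
  obtain a where "rw_Xi_star X A n \<omega> = rw_Xi X ((\<lambda>x. x + a) ` A) n \<omega>"
    using rw_Xi_star_attained[where X = X and n = n and \<omega> = \<omega>] by blast
  then have a: "k \<le> visits A (- a) (walk_steps X n \<omega>)"
    using assms(4) by (simp add: rw_Xi_shift_eq_visits)
  then have "0 < card {t \<in> {1..n}. - a + rw_S X t \<omega> \<in> A}"
    using assms(3) by (simp only: visits_walk_steps)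
  then obtain t where "t \<le> n" "- a + rw_S X t \<omega> \<in> A" by (auto simp: card_gt_0_iff)
  then have "- a + rw_S X t \<omega> \<in> {0..d}" and "\<bar>rw_S X t \<omega>\<bar> \<le> int n"
    using assms(1) abs_rw_S_le[of X \<omega> t, OF assms(2)] by auto
  then have "a \<in> {- int n - d..int n}" by auto
  with a show ?thesis by blast
qed

end

section \<open>The law of the first steps\<close>

locale walk_process = biased_walk p q + prob_space M
  for p q :: real and M :: "'a measure" +
  fixes X :: "nat \<Rightarrow> 'a \<Rightarrow> int"
  assumes indep: "indep_vars (\<lambda>_. count_space UNIV) X UNIV"
    and prob_X_1: "\<And>i. prob {\<omega> \<in> space M. X i \<omega> = 1} = p"
    and prob_X_minus_1: "\<And>i. prob {\<omega> \<in> space M. X i \<omega> = -1} = q"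
begin

lemma X_measurable [measurable]: "X i \<in> M \<rightarrow>\<^sub>M count_space UNIV"
  using indep by (simp add: indep_vars_def)

lemma AE_X_pm: "AE \<omega> in M. \<forall>i. X i \<omega> \<in> {-1, 1}"
proof -
  have "prob ({\<omega> \<in> space M. X i \<omega> = 1} \<union> {\<omega> \<in> space M. X i \<omega> = -1}) = 1" for i
    using prob_X_1 prob_X_minus_1 p_plus_q by (subst finite_measure_Union) auto
  then have "AE \<omega> in M. \<omega> \<in> {\<omega> \<in> space M. X i \<omega> = 1} \<union> {\<omega> \<in> space M. X i \<omega> = -1}" for i
    by (rule AE_prob_1)
  then have "AE \<omega> in M. X i \<omega> \<in> {-1, 1}" for i
    by (rule eventually_mono) auto
  then show ?thesis by (simp add: AE_all_countable)
qed

lemma sets_walk_steps_eq [measurable]: "{\<omega> \<in> space M. walk_steps X n \<omega> = w} \<in> sets M"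
proof -
  have "{\<omega> \<in> space M. walk_steps X n \<omega> = w}
      = (if length w = n then {\<omega> \<in> space M. \<forall>i<n. X i \<omega> = w ! i} else {})"
    by (auto simp: walk_steps_def list_eq_iff_nth_eq)
  then show ?thesis by simp
qed

lemma walk_steps_measurable [measurable]: "walk_steps X n \<in> M \<rightarrow>\<^sub>M count_space UNIV"
  by (subst measurable_count_space_eq_countable) (auto simp: vimage_def Int_def conj_commute)

lemma prob_walk_steps_eq:
  assumes "w \<in> pm_words n"
  shows "prob {\<omega> \<in> space M. walk_steps X n \<omega> = w} = word_prob w"
proof (cases "n = 0")
  case False
  have len: "length w = n" using assms by (rule length_pm_words)
  have "prob {\<omega> \<in> space M. walk_steps X n \<omega> = w} = prob (\<Inter>i\<in>{..<n}. X i -` {w ! i} \<inter> space M)"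
    using False len by (intro arg_cong[where f = prob]) (auto simp: walk_steps_def list_eq_iff_nth_eq)
  also have "\<dots> = (\<Prod>i<n. prob (X i -` {w ! i} \<inter> space M))"
    using False by (intro indep_varsD[OF indep]) auto
  also have "\<dots> = (\<Prod>i<n. if w ! i = 1 then p else q)"
  proof (intro prod.cong refl)
    fix i assume "i \<in> {..<n}"
    then have "w ! i \<in> set w" using len by simp
    then have "w ! i \<in> {-1, 1}" using assms by (auto simp: pm_words_def)
    moreover have "X i -` {c} \<inter> space M = {\<omega> \<in> space M. X i \<omega> = c}" for c by auto
    ultimately show "prob (X i -` {w ! i} \<inter> space M) = (if w ! i = 1 then p else q)"
      using prob_X_1 prob_X_minus_1 by auto
  qed
  also have "\<dots> = word_prob w"
    using len by (simp add: word_prob_def prod.list_conv_set_nth atLeast0LessThan)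
  finally show ?thesis .
qed (use assms prob_space in \<open>simp add: walk_steps_def\<close>)

lemma prob_walk_steps: "prob {\<omega> \<in> space M. P (walk_steps X n \<omega>)} = walk_prob n P"
proof -
  let ?W = "{w \<in> pm_words n. P w}"
  have "AE \<omega> in M. walk_steps X n \<omega> \<in> pm_words n"
    using AE_X_pm by eventually_elim (auto simp: pm_words_def walk_steps_def)
  then have "AE \<omega> in M. \<omega> \<in> {\<omega> \<in> space M. P (walk_steps X n \<omega>)}
      \<longleftrightarrow> \<omega> \<in> (\<Union>w\<in>?W. {\<omega> \<in> space M. walk_steps X n \<omega> = w})"
    by eventually_elim auto
  then have "prob {\<omega> \<in> space M. P (walk_steps X n \<omega>)}
      = prob (\<Union>w\<in>?W. {\<omega> \<in> space M. walk_steps X n \<omega> = w})"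
    by (rule measure_eq_AE) auto
  also have "\<dots> = (\<Sum>w\<in>?W. prob {\<omega> \<in> space M. walk_steps X n \<omega> = w})"
    by (rule measure_finite_Union) (auto simp: disjoint_family_on_def)
  also have "\<dots> = walk_prob n P"
    by (simp add: walk_prob_def prob_walk_steps_eq)
  finally show ?thesis .
qed

end

section \<open>Almost sure asymptotics of the maximal occupation time\<close>

locale two_point_process = two_point_walk p q z + walk_process p q M X
  for p q :: real and z :: int and M :: "'a measure" and X :: "nat \<Rightarrow> 'a \<Rightarrow> int"
begin

context
  fixes e :: real
  assumes e_pos: "0 < e"
begin

definition k_up :: "nat \<Rightarrow> nat" where
  "k_up j = nat \<lceil>(1 + e) * kap * (real j * ln 2)\<rceil> + 1"

definition many_visits :: "nat \<Rightarrow> 'a set" where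
  "many_visits j = {\<omega> \<in> space M. \<exists>a\<in>{- int (2 ^ j) - z..int (2 ^ j)}.
      k_up j \<le> visits {0, z} (- a) (walk_steps X (2 ^ j) \<omega>)}"

lemma prob_many_visits:
  "prob (many_visits j) \<le> (2 * 2 ^ j + z + 1) * 2 powr (- (1 + e) * real j) / (lam * s)"
proof -
  let ?I = "{- int (2 ^ j) - z..int (2 ^ j)}"
  have "prob (many_visits j)
      = walk_prob (2 ^ j) (\<lambda>w. \<exists>a\<in>?I. k_up j \<le> visits {0, z} (- a) w)"
    unfolding many_visits_def by (rule prob_walk_steps)
  also have "\<dots> \<le> (\<Sum>a\<in>?I. walk_prob (2 ^ j) (\<lambda>w. k_up j \<le> visits {0, z} (- a) w))"
    by (rule walk_prob_bex_le) simp
  also have "\<dots> \<le> (\<Sum>a\<in>?I. lam ^ k_up j / (lam * s))"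
    by (intro sum_mono walk_prob_visits_ge_le) (simp add: k_up_def)
  also have "\<dots> = (2 * 2 ^ j + z + 1) * (lam ^ k_up j / (lam * s))"
    using z_pos by simp
  also have "lam ^ k_up j \<le> 2 powr (- (1 + e) * real j)"
  proof -
    have "kap * ((1 + e) * (real j * ln 2)) \<le> real (k_up j)"
      unfolding k_up_def by (simp add: algebra_simps) linarith
    then have "lam ^ k_up j \<le> exp (- ((1 + e) * (real j * ln 2)))" by (rule lam_power_le_exp)
    also have "\<dots> = 2 powr (- (1 + e) * real j)" by (simp add: powr_def algebra_simps)
    finally show ?thesis .
  qed
  finally show ?thesis
    using z_pos lam_pos s_pos by (simp add: divide_right_mono mult_left_mono)
qed

lemma AE_eventually_few_visits:
  "AE \<omega> in M. eventually (\<lambda>j. \<omega> \<in> space M - many_visits j) sequentially"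
proof (rule borel_cantelli_AE1)
  show "many_visits j \<in> sets M" for j
    unfolding many_visits_def by measurable
  have "(\<lambda>j. (2 * 2 ^ j + real_of_int z + 1) * 2 powr (- (1 + e) * real j))
      \<in> O(\<lambda>j. 1 / real j ^ 2)"
    using e_pos by real_asymp
  then have "summable (\<lambda>j. (2 * 2 ^ j + real_of_int z + 1) * 2 powr (- (1 + e) * real j) / (lam * s))"
    by (intro summable_divide summable_bigo_inverse_square)
  then show "summable (\<lambda>j. measure M (many_visits j))"
    by (rule summable_comparison_test') (use prob_many_visits in auto)
qed (simp add: less_top[symmetric])

lemma rw_Xi_star_pow2_le:
  assumes "\<omega> \<notin> many_visits j" and "\<And>i. X i \<omega> \<in> {-1, 1}" and "\<omega> \<in> space M"
  shows "real (rw_Xi_star X {0, z} (2 ^ j) \<omega>) \<le> (1 + e) * kap * ln 2 * real j + 1"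
proof -
  have "rw_Xi_star X {0, z} (2 ^ j) \<omega> < k_up j"
  proof (rule ccontr)
    assume "\<not> ?thesis"
    then have "\<exists>a\<in>{- int (2 ^ j) - z..int (2 ^ j)}.
        k_up j \<le> visits {0, z} (- a) (walk_steps X (2 ^ j) \<omega>)"
      using assms(2) z_pos by (intro rw_Xi_star_ge_imp_visits) (auto simp: k_up_def)
    then show False using assms(1,3) by (auto simp: many_visits_def)
  qed
  moreover have "0 \<le> (1 + e) * kap * ln 2 * real j" using e_pos kap_pos by simp
  ultimately show ?thesis unfolding k_up_def by (simp add: algebra_simps) linarith
qed

lemma AE_eventually_rw_Xi_star_le:
  "AE \<omega> in M. eventually (\<lambda>n.
     real (rw_Xi_star X {0, z} n \<omega>) \<le> (1 + e) * kap * ln (real n) + ((1 + e) * kap * ln 2 + 1))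
     sequentially"
  using AE_eventually_few_visits AE_X_pm
proof eventually_elim
  case (elim \<omega>)
  let ?a = "(1 + e) * kap * ln 2"
  have "eventually (\<lambda>j. real (rw_Xi_star X {0, z} (2 ^ j) \<omega>) \<le> ?a * real j + 1) sequentially"
    using elim(1) rw_Xi_star_pow2_le elim(2) by (auto elim: eventually_mono)
  then have "eventually (\<lambda>n. real (rw_Xi_star X {0, z} n \<omega>) \<le> ?a * log 2 (real n) + (?a + 1))
      sequentially"
    using mono_rw_Xi_star[of "{0, z}" X \<omega>] e_pos kap_pos
    by (intro eventually_le_log_of_dyadic) (auto simp: mono_def)
  then show ?case by (simp add: log_def mult.assoc)
qed

end

context
  fixes e :: real and c0 c1 :: nat
  assumes e_pos: "0 < e" and e_less_1: "e < 1"
    and c0: "r ^ c0 \<le> lam" "1 \<le> c0" and c1: "r ^ c1 \<le> lam / 4"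
begin

definition k_lo :: "nat \<Rightarrow> nat" where
  "k_lo n = nat \<lfloor>(1 - e) * kap * ln (real n)\<rfloor> + 1"

definition block_len :: "nat \<Rightarrow> nat" where
  "block_len n = c0 * (k_lo n + 1) + c1"

definition no_rich_block :: "nat \<Rightarrow> 'a set" where
  "no_rich_block n = {\<omega> \<in> space M. \<forall>b < n div block_len n. \<not> k_lo n \<le>
      visits {0, z} 0 (block (block_len n) b (walk_steps X (n div block_len n * block_len n) \<omega>))}"

lemma prob_no_rich_block:
  "prob (no_rich_block n) \<le> exp (- (lam ^ k_lo n / 2 * real (n div block_len n)))"
proof -
  let ?L = "block_len n" and ?B = "n div block_len n" and ?P = "\<lambda>u. k_lo n \<le> visits {0, z} 0 u"
  have "prob (no_rich_block n) = walk_prob (?B * ?L) (\<lambda>w. \<forall>b<?B. \<not> ?P (block ?L b w))"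
    unfolding no_rich_block_def by (rule prob_walk_steps)
  also have "\<dots> = (1 - walk_prob ?L ?P) ^ ?B"
    using walk_prob_blocks[where P = "\<lambda>u. \<not> ?P u"] by (simp only: walk_prob_Not)
  also have "\<dots> \<le> exp (- (walk_prob ?L ?P * real ?B))"
    by (rule one_minus_power_le_exp[OF walk_prob_le_1])
  also have "\<dots> \<le> exp (- (lam ^ k_lo n / 2 * real ?B))"
  proof -
    have "lam ^ k_lo n / 2 \<le> walk_prob ?L ?P"
      unfolding block_len_def by (rule walk_prob_visits_ge_block[OF c0(1) c1]) (simp add: k_lo_def)
    then have "lam ^ k_lo n / 2 * real ?B \<le> walk_prob ?L ?P * real ?B"
      by (rule mult_right_mono) simp
    then show ?thesis by simp
  qed
  finally show ?thesis .
qed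

lemma lam_power_k_lo:
  assumes "0 < n"
  shows "lam * real n powr (e - 1) \<le> lam ^ k_lo n"
proof -
  have "0 \<le> (1 - e) * kap * ln (real n)"
    using assms e_less_1 kap_pos by simp
  then have "real (k_lo n) \<le> kap * ((1 - e) * ln (real n)) + 1"
    unfolding k_lo_def by (simp add: algebra_simps) linarith
  then have "lam * exp (- ((1 - e) * ln (real n))) \<le> lam ^ k_lo n"
    by (rule lam_power_ge_exp)
  then show ?thesis using assms by (simp add: powr_def algebra_simps)
qed

lemma block_len_le:
  assumes "3 \<le> n"
  shows "real (block_len n) \<le> (c0 * (kap + 2) + c1) * ln (real n)"
proof -
  have "1 \<le> ln (real n)"
    using assms exp_le ln_ge_iff[of "real n" 1] by auto
  moreover have "real (k_lo n) \<le> kap * ln (real n) + 1"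
  proof -
    have "(1 - e) * kap * ln (real n) \<le> kap * ln (real n)"
      using \<open>1 \<le> ln (real n)\<close> e_pos kap_pos by (simp add: mult_le_cancel_right1)
    moreover have "0 \<le> (1 - e) * kap * ln (real n)"
      using \<open>1 \<le> ln (real n)\<close> e_less_1 kap_pos by simp
    ultimately show ?thesis unfolding k_lo_def by linarith
  qed
  ultimately have "real c0 * (real (k_lo n) + 1) \<le> real c0 * ((kap + 2) * ln (real n))"
    by (intro mult_left_mono) (auto simp: algebra_simps)
  moreover have "real c1 \<le> real c1 * ln (real n)"
    using \<open>1 \<le> ln (real n)\<close> by (simp add: mult_le_cancel_left1)
  ultimately show ?thesis by (simp add: block_len_def algebra_simps)
qed

lemma prob_no_rich_block_le:
  assumes "3 \<le> n"
  defines "D \<equiv> c0 * (kap + 2) + c1"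
  shows "prob (no_rich_block n)
    \<le> exp (1 / 2) * exp (- (lam / (2 * D) * real n powr e / ln (real n)))"
proof -
  let ?L = "block_len n" and ?P = "lam ^ k_lo n / 2"
  have ln_pos: "0 < ln (real n)" using assms by simp
  have D_pos: "0 < D" using c0 kap_pos by (simp add: D_def add_pos_nonneg)
  have L_pos: "0 < ?L" using c0 by (simp add: block_len_def)
  have P: "lam * real n powr (e - 1) / 2 \<le> ?P" "?P \<le> 1 / 2" "0 \<le> ?P"
    using lam_power_k_lo[of n] assms lam_pos lam_less_1 by (auto simp: power_le_one)
  have "real n / (D * ln (real n)) - 1 \<le> real (n div ?L)"
  proof -
    have "real n / (D * ln (real n)) \<le> real n / real ?L"
      using block_len_le[OF assms(1)] L_pos by (intro divide_left_mono) (auto simp: D_def)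
    then show ?thesis using real_div_minus_1_le_div[OF L_pos, of n] by linarith
  qed
  then have "?P * (real n / (D * ln (real n)) - 1) \<le> ?P * real (n div ?L)"
    using P(3) by (rule mult_left_mono)
  moreover have "lam * real n powr (e - 1) / 2 * (real n / (D * ln (real n)))
      \<le> ?P * (real n / (D * ln (real n)))"
    using P(1) D_pos ln_pos by (intro mult_right_mono) auto
  moreover have "lam * real n powr (e - 1) / 2 * (real n / (D * ln (real n)))
      = lam / (2 * D) * real n powr e / ln (real n)"
    using assms by (simp add: powr_diff field_simps)
  ultimately have "lam / (2 * D) * real n powr e / ln (real n) - 1 / 2 \<le> ?P * real (n div ?L)"
    using P(2) by (simp add: right_diff_distrib)
  then have "exp (- (?P * real (n div ?L)))
      \<le> exp (1 / 2) * exp (- (lam / (2 * D) * real n powr e / ln (real n)))"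
    by (simp only: exp_add[symmetric] exp_le_cancel_iff)
  then show ?thesis using prob_no_rich_block[of n] by linarith
qed

lemma AE_eventually_some_rich_block:
  "AE \<omega> in M. eventually (\<lambda>n. \<omega> \<in> space M - no_rich_block n) sequentially"
proof (rule borel_cantelli_AE1)
  show "no_rich_block n \<in> sets M" for n
    unfolding no_rich_block_def by measurable
  define C where "C = lam / (2 * (c0 * (kap + 2) + c1))"
  have "0 < C" using lam_pos c0 kap_pos by (simp add: C_def add_pos_nonneg)
  then have "(\<lambda>n. exp (- (C * real n powr e / ln (real n)))) \<in> O(\<lambda>n. 1 / real n ^ 2)"
    using e_pos by real_asymp
  then have "summable (\<lambda>n. exp (1 / 2) * exp (- (C * real n powr e / ln (real n))))"
    by (intro summable_mult summable_bigo_inverse_square)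
  then show "summable (\<lambda>n. measure M (no_rich_block n))"
    by (rule summable_comparison_test'[where N = 3])
       (use prob_no_rich_block_le in \<open>auto simp: C_def\<close>)
qed (simp add: less_top[symmetric])

lemma AE_eventually_rw_Xi_star_ge:
  "AE \<omega> in M. eventually (\<lambda>n. (1 - e) * kap * ln (real n) \<le> real (rw_Xi_star X {0, z} n \<omega>))
     sequentially"
  using AE_eventually_some_rich_block
proof eventually_elim
  case (elim \<omega>)
  then show ?case
  proof (rule eventually_mono)
    fix n assume "\<omega> \<in> space M - no_rich_block n"
    then obtain b where b: "b < n div block_len n" and rich:
      "k_lo n \<le> visits {0, z} 0
         (block (block_len n) b (walk_steps X (n div block_len n * block_len n) \<omega>))"
      by (auto simp: no_rich_block_def)
    have "visits {0, z} 0 (block (block_len n) b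
        (walk_steps X (n div block_len n * block_len n) \<omega>)) \<le> rw_Xi_star X {0, z} n \<omega>"
      by (rule visits_block_le_rw_Xi_star) (use b in \<open>simp_all add: div_times_less_eq_dividend\<close>)
    with rich have "k_lo n \<le> rw_Xi_star X {0, z} n \<omega>" by (rule order_trans)
    moreover have "(1 - e) * kap * ln (real n) \<le> real (k_lo n)"
      unfolding k_lo_def by linarith
    ultimately show "(1 - e) * kap * ln (real n) \<le> real (rw_Xi_star X {0, z} n \<omega>)"
      by linarith
  qed
qed

end

lemma AE_eventually_ratio_le:
  assumes "0 < e"
  shows "AE \<omega> in M. eventually (\<lambda>n. real (rw_Xi_star X {0, z} n \<omega>) / ln (real n) \<le> kap + e)
    sequentially"
proof -
  define e' where "e' = e / (2 * kap)"
  define C where "C = (1 + e') * kap * ln 2 + 1"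
  have e': "0 < e'" "(1 + e') * kap = kap + e / 2"
    using assms kap_pos by (auto simp: e'_def field_simps)
  have "(\<lambda>n. C / ln (real n)) \<longlonglongrightarrow> 0" by real_asymp
  then have small: "eventually (\<lambda>n. C / ln (real n) < e / 2) sequentially"
    using assms by (intro order_tendstoD) auto
  have ln_pos: "eventually (\<lambda>n. 0 < ln (real n)) sequentially"
    by (rule eventually_sequentiallyI[of 2]) simp
  show ?thesis
    using AE_eventually_rw_Xi_star_le[OF e'(1)]
  proof eventually_elim
    case (elim \<omega>)
    with small ln_pos show ?case
    proof eventually_elim
      case (elim n)
      then have "real (rw_Xi_star X {0, z} n \<omega>) / ln (real n) \<le> (1 + e') * kap + C / ln (real n)"
        by (simp add: C_def field_simps)
      then show ?case using e'(2) elim(1) by linarith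
    qed
  qed
qed

lemma AE_eventually_ratio_ge:
  assumes "0 < e"
  shows "AE \<omega> in M. eventually (\<lambda>n. kap - e \<le> real (rw_Xi_star X {0, z} n \<omega>) / ln (real n))
    sequentially"
proof -
  define e' where "e' = min (1 / 2) (e / kap)"
  have e': "0 < e'" "e' < 1" "kap - e \<le> (1 - e') * kap"
    using assms kap_pos by (auto simp: e'_def min_def field_simps)
  obtain c0 where c0: "1 \<le> c0" "r ^ c0 \<le> lam" using ex_r_power_le[OF lam_pos] by blast
  obtain c1 where c1: "r ^ c1 \<le> lam / 4" using ex_r_power_le[of "lam / 4"] lam_pos by auto
  have ln_pos: "eventually (\<lambda>n. 0 < ln (real n)) sequentially"
    by (rule eventually_sequentiallyI[of 2]) simp
  show ?thesis
    using AE_eventually_rw_Xi_star_ge[OF e'(1,2) c0(2,1) c1]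
  proof eventually_elim
    case (elim \<omega>)
    with ln_pos show ?case
    proof eventually_elim
      case (elim n)
      then have "(1 - e') * kap \<le> real (rw_Xi_star X {0, z} n \<omega>) / ln (real n)"
        by (simp add: field_simps)
      then show ?case using e'(3) by linarith
    qed
  qed
qed

lemma AE_tendsto_rw_Xi_star_div_ln:
  "AE \<omega> in M. (\<lambda>n. real (rw_Xi_star X {0, z} n \<omega>) / ln (real n)) \<longlonglongrightarrow> kap"
  by (rule AE_tendsto_of_eventually_bounds[OF AE_eventually_ratio_le AE_eventually_ratio_ge])

end

theorem theorem3p2:
  fixes M :: "'a measure" and X :: "nat \<Rightarrow> 'a \<Rightarrow> int"
    and p q h :: real and z :: int
  assumes "prob_space M"
    and "0 < q" and "q < p" and "p < 1" and "p + q = 1" and "h = q / p"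
    and "prob_space.indep_vars M (\<lambda>_. count_space UNIV) X UNIV"
    and "\<And>i. measure M {\<omega> \<in> space M. X i \<omega> = 1} = p"
    and "\<And>i. measure M {\<omega> \<in> space M. X i \<omega> = -1} = q"
    and "z > 0"
  shows "AE \<omega> in M.
    (\<lambda>n. real (rw_Xi_star X {0, z} n \<omega>) / ln (real n))
      \<longlonglongrightarrow> -1 / ln ((2 * q + h powr (real_of_int z / 2)) / (1 + h powr (real_of_int z / 2)))"
proof -
  interpret two_point_walk p q z
    using assms by unfold_locales auto
  interpret prob_space M
    by (rule assms(1))
  interpret two_point_process p q z M X
    using assms(7-9) by unfold_locales
  have "h = biased_walk.h p q" using assms(6) by (simp add: h_def)
  then have "-1 / ln ((2 * q + h powr (real_of_int z / 2)) / (1 + h powr (real_of_int z / 2))) = kap"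
    by (simp add: kap_def lam_def s_def)
  then show ?thesis using AE_tendsto_rw_Xi_star_div_ln by simp
qed

end
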